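(* For every positive integer $t$ and every real $0<p\le1$, $$\sum_{i=1}^{t} i^p\le \frac{p}{p+1}\cdot\frac{t^p(t+1)^p}{(t+1)^p-t^p}.$$ *)

theory Defs
  imports Complex_Main
begin

end

theory Submission
  imports Defs
begin

text \<open>
  Let B(x) = p/(p+1) * x^p (x+1)^p / ((x+1)^p - x^p). As B(0) = 0, the bound follows by
  telescoping from B(x - 1) + x^p <= B(x) for x >= 1. Clearing denominators and putting
  s = 1/x, this step becomes (1+s)^p + (1-s)^p <= 1 + p + (1-p)(1-s^2)^p, an equality at s = 0.
  The difference of the two sides is increasing in s: after division by (1-s^2)^(p-1) its
  derivative is a positive multiple of (1+s)^(1-p) - (1-s)^(1-p) - 2(1-p)s, which is itself
  increasing from 0 since (1+s)^(-p) + (1-s)^(-p) >= 2 by AM-GM, as (1+s)(1-s) <= 1.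
\<close>

lemma powr_add_powr_ge_two:
  fixes a b q :: real
  assumes "a > 0" "b > 0" "a * b \<le> 1" "q \<le> 0"
  shows "2 \<le> a powr q + b powr q"
proof -
  have "(a * b) powr (- q) \<le> 1"
    using assms by (intro powr_le1) auto
  hence "1 \<le> (a * b) powr q"
    using assms(1,2) by (simp add: powr_minus inverse_le_1_iff)
  hence "1 \<le> sqrt (a powr q * b powr q)"
    using assms(1,2) by (simp add: powr_mult)
  also have "\<dots> \<le> (a powr q + b powr q) / 2"
    by (rule arith_geo_mean_sqrt) auto
  finally show ?thesis by simp
qed

lemma powr_one_plus_minus_one_minus_ge:
  fixes r s :: real
  assumes "0 \<le> r" "r \<le> 1" "0 \<le> s" "s < 1"
  shows "2 * r * s \<le> (1 + s) powr r - (1 - s) powr r"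
proof -
  let ?g = "\<lambda>y. (1 + y) powr r - (1 - y) powr r - 2 * r * y"
  have "?g 0 \<le> ?g s"
  proof (rule DERIV_nonneg_imp_increasing_open[OF \<open>0 \<le> s\<close>])
    fix y assume y: "0 < y" "y < s"
    have "DERIV ?g y :> r * ((1 + y) powr (r - 1) + (1 - y) powr (r - 1) - 2)"
      using y assms by (auto intro!: derivative_eq_intros simp: algebra_simps)
    moreover have "2 \<le> (1 + y) powr (r - 1) + (1 - y) powr (r - 1)"
      using y assms by (intro powr_add_powr_ge_two) (auto simp: algebra_simps)
    ultimately show "\<exists>d. DERIV ?g y :> d \<and> 0 \<le> d"
      using \<open>0 \<le> r\<close> by force
  next
    show "continuous_on {0..s} ?g"
      using assms by (intro continuous_intros) auto
  qed
  thus ?thesis by simp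
qed

lemma powr_one_plus_plus_one_minus_le:
  fixes p s :: real
  assumes "0 < p" "p \<le> 1" "0 \<le> s" "s \<le> 1"
  shows "(1 + s) powr p + (1 - s) powr p \<le> 1 + p + (1 - p) * (1 - s\<^sup>2) powr p"
proof -
  let ?F = "\<lambda>y. 1 + p + (1 - p) * (1 - y\<^sup>2) powr p - (1 + y) powr p - (1 - y) powr p"
  have "?F 0 \<le> ?F s"
  proof (rule DERIV_nonneg_imp_increasing_open[OF \<open>0 \<le> s\<close>])
    fix y assume y: "0 < y" "y < s"
    have "y < 1" using y assms by simp
    have y2: "1 - y\<^sup>2 = (1 + y) * (1 - y)"
      by (simp add: power2_eq_square algebra_simps)
    have "0 < 1 - y\<^sup>2" using y \<open>y < 1\<close> unfolding y2 by simp
    have "DERIV ?F y :>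
        p * ((1 - y) powr (p - 1) - (1 + y) powr (p - 1) - 2 * (1 - p) * y * (1 - y\<^sup>2) powr (p - 1))"
      using y \<open>y < 1\<close> \<open>0 < 1 - y\<^sup>2\<close>
      by (auto intro!: derivative_eq_intros simp: algebra_simps)
    moreover have "(1 - y) powr (p - 1) - (1 + y) powr (p - 1)
        = (1 - y\<^sup>2) powr (p - 1) * ((1 + y) powr (1 - p) - (1 - y) powr (1 - p))"
    proof -
      have "(1 + y) powr (1 - p) * (1 + y) powr (p - 1) = 1"
        and "(1 - y) powr (1 - p) * (1 - y) powr (p - 1) = 1"
        using y \<open>y < 1\<close> by (simp_all flip: powr_add)
      moreover have "(1 - y\<^sup>2) powr (p - 1) = (1 + y) powr (p - 1) * (1 - y) powr (p - 1)"
        using y \<open>y < 1\<close> unfolding y2 by (simp add: powr_mult)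
      ultimately show ?thesis by (simp add: algebra_simps)
    qed
    moreover have "2 * (1 - p) * y \<le> (1 + y) powr (1 - p) - (1 - y) powr (1 - p)"
      using y \<open>y < 1\<close> assms by (intro powr_one_plus_minus_one_minus_ge) auto
    ultimately have "DERIV ?F y :> p * (1 - y\<^sup>2) powr (p - 1)
        * ((1 + y) powr (1 - p) - (1 - y) powr (1 - p) - 2 * (1 - p) * y)"
      and "0 \<le> (1 + y) powr (1 - p) - (1 - y) powr (1 - p) - 2 * (1 - p) * y"
      by (simp_all add: algebra_simps)
    then show "\<exists>d. DERIV ?F y :> d \<and> 0 \<le> d"
      using \<open>0 < p\<close> by force
  next
    have "continuous_on {0..s} (\<lambda>y. (1 - y\<^sup>2) powr p)"
      using assms
      by (intro continuous_on_powr' continuous_intros) (auto simp: power2_eq_square intro: mult_le_one)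
    moreover have "continuous_on {0..s} (\<lambda>y. (1 + y) powr p)"
      using assms by (intro continuous_on_powr' continuous_intros) auto
    moreover have "continuous_on {0..s} (\<lambda>y. (1 - y) powr p)"
      using assms by (intro continuous_on_powr' continuous_intros) auto
    ultimately show "continuous_on {0..s} ?F"
      by (intro continuous_on_diff continuous_on_add continuous_on_mult continuous_on_const)
  qed
  thus ?thesis by simp
qed

lemma powr_neighbours_le:
  fixes p x :: real
  assumes "0 < p" "p \<le> 1" "1 \<le> x"
  shows "x powr p * (x + 1) powr p + x powr p * (x - 1) powr p
         \<le> (1 + p) * (x powr p)\<^sup>2 + (1 - p) * ((x + 1) powr p * (x - 1) powr p)"
proof -
  have "x > 0" using assms by simp
  define X P M where "X = x powr p" and "P = (x + 1) powr p" and "M = (x - 1) powr p"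
  have "X > 0" using \<open>x > 0\<close> by (simp add: X_def)
  have "(1 + 1/x) powr p + (1 - 1/x) powr p \<le> 1 + p + (1 - p) * (1 - (1/x)\<^sup>2) powr p"
    using assms \<open>x > 0\<close> by (intro powr_one_plus_plus_one_minus_le) auto
  moreover have "(1 + 1/x) powr p = P / X" and "(1 - 1/x) powr p = M / X"
    using \<open>x > 0\<close> by (simp_all add: P_def M_def X_def field_simps flip: powr_divide)
  moreover have "1 - (1/x)\<^sup>2 = ((x + 1) * (x - 1)) / (x * x)"
    using \<open>x > 0\<close> by (simp add: field_simps power2_eq_square)
  hence "(1 - (1/x)\<^sup>2) powr p = P * M / (X * X)"
    using \<open>x > 0\<close> by (simp add: P_def M_def X_def powr_divide powr_mult)
  ultimately have "P / X + M / X \<le> 1 + p + (1 - p) * (P * M / (X * X))"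
    by simp
  from mult_right_mono[OF this, of "X * X"]
  have "X * P + X * M \<le> (1 + p) * X\<^sup>2 + (1 - p) * (P * M)"
    using \<open>X > 0\<close> by (simp add: distrib_right power2_eq_square) (simp add: algebra_simps)
  thus ?thesis by (simp add: X_def P_def M_def)
qed

definition powr_sum_bound :: "real \<Rightarrow> real \<Rightarrow> real" where
  "powr_sum_bound p x = p / (p + 1) * (x powr p * (x + 1) powr p / ((x + 1) powr p - x powr p))"

lemma powr_sum_bound_step:
  fixes p x :: real
  assumes "0 < p" "p \<le> 1" "1 \<le> x"
  shows "powr_sum_bound p (x - 1) + x powr p \<le> powr_sum_bound p x"
proof -
  define X P M where "X = x powr p" and "P = (x + 1) powr p" and "M = (x - 1) powr p"
  have "0 \<le> M" "M < X" "X < P"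
    using assms by (auto simp: M_def X_def P_def intro: powr_less_mono2)
  have "powr_sum_bound p x - (powr_sum_bound p (x - 1) + x powr p)
      = X * ((1 + p) * X\<^sup>2 + (1 - p) * (P * M) - (X * P + X * M)) / ((p + 1) * (X - M) * (P - X))"
    using \<open>0 < p\<close> \<open>M < X\<close> \<open>X < P\<close>
    by (simp add: powr_sum_bound_def X_def P_def M_def divide_simps)
       (simp add: algebra_simps power2_eq_square)
  also have "\<dots> \<ge> 0"
    using powr_neighbours_le[OF assms] \<open>0 < p\<close> \<open>0 \<le> M\<close> \<open>M < X\<close> \<open>X < P\<close>
    by (intro divide_nonneg_pos mult_nonneg_nonneg) (auto simp: X_def P_def M_def)
  finally show ?thesis by simp
qed

theorem lemma4p4:
  fixes t :: nat and p :: real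
  assumes "t \<ge> 1" and "0 < p" and "p \<le> 1"
  shows "(\<Sum>i=1..t. (real i) powr p)
           \<le> p / (p + 1) * ((real t) powr p * (real t + 1) powr p / ((real t + 1) powr p - (real t) powr p))"
proof -
  have "(\<Sum>i=1..n. (real i) powr p) \<le> powr_sum_bound p (real n)" for n
  proof (induction n)
    case 0
    then show ?case by (simp add: powr_sum_bound_def)
  next
    case (Suc n)
    have "(\<Sum>i=1..Suc n. (real i) powr p) \<le> powr_sum_bound p (real n) + real (Suc n) powr p"
      using Suc.IH by simp
    also have "\<dots> \<le> powr_sum_bound p (real (Suc n))"
      using powr_sum_bound_step[of p "real (Suc n)"] assms by simp
    finally show ?case .
  qed
  then show ?thesis by (simp add: powr_sum_bound_def)
qed

end
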